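(* For every set $X \subseteq \mathbb N$ of natural numbers there exists a (countable) homogeneous relational structure $\mathbb A_X$ such that membership in $X$ is many-one reducible (by a computable reduction) to the induced substructure problem for $\mathbb A_X$.
   Context: A relational structure $\mathbb A$ is homogeneous if every isomorphism between two finite induced substructures of $\mathbb A$ extends to an automorphism of $\mathbb A$. The induced substructure problem for $\mathbb A$ asks, given a finite structure over the same vocabulary, whether it is isomorphic to an induced substructure of $\mathbb A$. *)

theory Defs
  imports Main "HOL-Library.Nat_Bijection"
begin

datatype recf = Zero | Succ | Proj nat | Comp recf "recf list" | Prim recf recf | Mn recf

inductive evalr :: "recf \<Rightarrow> nat list \<Rightarrow> nat \<Rightarrow> bool" where
  ev_zero: "evalr Zero xs 0"
| ev_succ: "evalr Succ (x # xs) (Suc x)"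
| ev_proj: "i < length xs \<Longrightarrow> evalr (Proj i) xs (xs ! i)"
| ev_comp: "list_all2 (\<lambda>g y. evalr g xs y) gs ys \<Longrightarrow> evalr f ys z \<Longrightarrow> evalr (Comp f gs) xs z"
| ev_prim0: "evalr f xs z \<Longrightarrow> evalr (Prim f g) (0 # xs) z"
| ev_primS: "evalr (Prim f g) (n # xs) y \<Longrightarrow> evalr g (y # n # xs) z
             \<Longrightarrow> evalr (Prim f g) (Suc n # xs) z"
| ev_mn: "evalr f (n # xs) 0 \<Longrightarrow> (\<forall>m<n. \<exists>k. evalr f (m # xs) (Suc k))
          \<Longrightarrow> evalr (Mn f) xs n"

definition computable :: "(nat \<Rightarrow> nat) \<Rightarrow> bool" where
  "computable f \<longleftrightarrow> (\<exists>r. \<forall>n. evalr r [n] (f n))"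

text \<open>A (finite) relational vocabulary is a list of arities: symbol i < length sig has arity sig!i.
  A structure has a carrier set and an interpretation of each symbol as a predicate on tuples.\<close>
record 'a rstruct =
  carrier :: "'a set"
  rel :: "nat \<Rightarrow> 'a list \<Rightarrow> bool"

definition struct_on :: "nat list \<Rightarrow> 'a rstruct \<Rightarrow> bool" where
  "struct_on sig A \<longleftrightarrow> (\<forall>i xs. rel A i xs \<longrightarrow>
      i < length sig \<and> length xs = sig ! i \<and> set xs \<subseteq> carrier A)"

definition partial_iso :: "nat list \<Rightarrow> 'a rstruct \<Rightarrow> ('a \<Rightarrow> 'a) \<Rightarrow> 'a set \<Rightarrow> 'a set \<Rightarrow> bool" where
  "partial_iso sig A h S T \<longleftrightarrow> S \<subseteq> carrier A \<and> T \<subseteq> carrier A \<and> bij_betw h S T \<and>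
     (\<forall>i < length sig. \<forall>xs. length xs = sig ! i \<and> set xs \<subseteq> S \<longrightarrow>
        (rel A i xs \<longleftrightarrow> rel A i (map h xs)))"

definition automorphism :: "nat list \<Rightarrow> 'a rstruct \<Rightarrow> ('a \<Rightarrow> 'a) \<Rightarrow> bool" where
  "automorphism sig A g \<longleftrightarrow> partial_iso sig A g (carrier A) (carrier A)"

definition homogeneous :: "nat list \<Rightarrow> 'a rstruct \<Rightarrow> bool" where
  "homogeneous sig A \<longleftrightarrow> (\<forall>h S T. finite S \<and> finite T \<and> partial_iso sig A h S T \<longrightarrow>
      (\<exists>g. automorphism sig A g \<and> (\<forall>x\<in>S. g x = h x)))"

definition embeds :: "nat list \<Rightarrow> 'b rstruct \<Rightarrow> 'a rstruct \<Rightarrow> bool" where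
  "embeds sig B A \<longleftrightarrow> (\<exists>e. inj_on e (carrier B) \<and> e ` carrier B \<subseteq> carrier A \<and>
     (\<forall>i < length sig. \<forall>xs. length xs = sig ! i \<and> set xs \<subseteq> carrier B \<longrightarrow>
        (rel B i xs \<longleftrightarrow> rel A i (map e xs))))"

text \<open>A code c = prod_encode (n, list_encode [r_0, ..., r_k]) denotes the structure with
  carrier {0..<n}, where relation i holds of a tuple xs iff xs has the right arity, entries
  below n, and list_encode xs occurs in list_decode r_i. Every natural number decodes to a
  finite sig-structure, and every finite sig-structure on {0..<n} arises (up to iso, all do).\<close>
definition decode_struct :: "nat list \<Rightarrow> nat \<Rightarrow> nat rstruct" where
  "decode_struct sig c = (let (n, r) = prod_decode c; rl = list_decode r in
     \<lparr> carrier = {..<n},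
       rel = (\<lambda>i xs. i < length sig \<and> i < length rl \<and> length xs = sig ! i \<and>
                     set xs \<subseteq> {..<n} \<and> list_encode xs \<in> set (list_decode (rl ! i))) \<rparr>)"

definition ISP :: "nat list \<Rightarrow> 'a rstruct \<Rightarrow> nat set" where
  "ISP sig A = {c. embeds sig (decode_struct sig c) A}"

definition many_one_reducible :: "nat set \<Rightarrow> nat set \<Rightarrow> bool" where
  "many_one_reducible X Y \<longleftrightarrow> (\<exists>f. computable f \<and> (\<forall>n. n \<in> X \<longleftrightarrow> f n \<in> Y))"

end

theory Submission
  imports Defs
begin

text \<open>For a set M of cycle lengths, all at least 3, the Henson digraph omitting induced directed
  cycles of lengths in M is built as the union of finite stages which realise, one by one, every
  one-point extension that creates no forbidden cycle. This extension property makes it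
  homogeneous by back and forth, and it makes every finite digraph without forbidden cycles
  embed. Since directed cycles of length at least 3 form an antichain under induced embeddings,
  the n-cycle embeds exactly when n \<notin> M. With M = {k + 3 | k \<notin> X}, the computable map sending
  k to a code of the (k + 3)-cycle reduces X to the induced substructure problem.\<close>

definition rel_embedding :: "'a set \<Rightarrow> ('a \<Rightarrow> 'a \<Rightarrow> bool) \<Rightarrow> ('b \<Rightarrow> 'b \<Rightarrow> bool) \<Rightarrow> ('a \<Rightarrow> 'b) \<Rightarrow> bool" where
  "rel_embedding D Q R e \<longleftrightarrow> inj_on e D \<and> (\<forall>x\<in>D. \<forall>y\<in>D. R (e x) (e y) = Q x y)"

lemma rel_embedding_cong:
  assumes "rel_embedding D Q R e" "\<And>x. x \<in> D \<Longrightarrow> e x = e' x"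
  shows "rel_embedding D Q R e'"
  using assms unfolding rel_embedding_def inj_on_def by simp

lemma rel_embedding_comp:
  assumes "rel_embedding D Q R e" "rel_embedding E R S f" "e ` D \<subseteq> E"
  shows "rel_embedding D Q S (f \<circ> e)"
  using assms unfolding rel_embedding_def
  by (auto intro: comp_inj_on inj_on_subset simp: image_subset_iff)

lemma rel_embedding_inv_into:
  assumes "rel_embedding D Q R e"
  shows "rel_embedding (e ` D) R Q (inv_into D e)"
  using assms unfolding rel_embedding_def by (auto simp: inj_on_inv_into inv_into_f_f)

definition dcycle :: "nat \<Rightarrow> nat \<Rightarrow> nat \<Rightarrow> bool" where
  "dcycle n x y \<longleftrightarrow> x < n \<and> y = Suc x mod n"

lemma dcycle_irrefl: "2 \<le> n \<Longrightarrow> \<not> dcycle n x x"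
  unfolding dcycle_def by (cases "Suc x < n") (auto simp: mod_if)

lemma dcycle_asym: "3 \<le> n \<Longrightarrow> dcycle n x y \<Longrightarrow> \<not> dcycle n y x"
  unfolding dcycle_def by (cases "Suc x < n"; cases "Suc (Suc x) < n") (auto simp: mod_if)

lemma dcycle_embedding_rotation:
  assumes emb: "rel_embedding {..<m} (dcycle m) (dcycle n) e" and m: "3 \<le> m"
    and i: "i < m"
  shows "e i = (e 0 + i) mod n"
  using i
proof (induction i)
  case 0
  have "dcycle n (e 0) (e (Suc 0))" using emb m unfolding rel_embedding_def dcycle_def by auto
  then show ?case unfolding dcycle_def by simp
next
  case (Suc i)
  have "dcycle n (e i) (e (Suc i))"
    using emb Suc.prems unfolding rel_embedding_def dcycle_def by auto
  then have "e (Suc i) = Suc (e i) mod n" unfolding dcycle_def by simp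
  then show ?case using Suc by (simp add: mod_Suc_eq)
qed

lemma dcycle_embedding_length:
  assumes emb: "rel_embedding {..<m} (dcycle m) (dcycle n) e" and "e ` {..<m} \<subseteq> {..<n}" and m: "3 \<le> m"
  shows "m = n"
proof -
  have "dcycle n (e (m - 1)) (e 0)" using emb m unfolding rel_embedding_def dcycle_def by auto
  then have "e 0 = Suc (e (m - 1)) mod n" unfolding dcycle_def by simp
  also have "\<dots> = (e 0 + m) mod n"
    using dcycle_embedding_rotation[OF emb m, of "m - 1"] m by (simp add: mod_Suc_eq)
  finally have "n dvd m"
    using mod_eq_dvd_iff_nat[of "e 0" "e 0 + m" n] assms(2) m by (auto simp: image_subset_iff)
  moreover have "m \<le> n"
    using card_inj_on_le[of e "{..<m}" "{..<n}"] emb assms(2) unfolding rel_embedding_def by simp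
  ultimately show ?thesis using m by (auto dest: dvd_imp_le)
qed

definition cycle_free :: "nat set \<Rightarrow> ('a \<Rightarrow> 'a \<Rightarrow> bool) \<Rightarrow> 'a set \<Rightarrow> bool" where
  "cycle_free M R D \<longleftrightarrow>
     (\<forall>m\<in>M. \<forall>e. e ` {..<m} \<subseteq> D \<longrightarrow> \<not> rel_embedding {..<m} (dcycle m) R e)"

lemma cycle_free_embedding:
  assumes "cycle_free M R D" "rel_embedding D' Q R f" "f ` D' \<subseteq> D"
  shows "cycle_free M Q D'"
  unfolding cycle_free_def
proof (intro ballI allI impI notI)
  fix m e assume "m \<in> M" "e ` {..<m} \<subseteq> D'" "rel_embedding {..<m} (dcycle m) Q e"
  then have "rel_embedding {..<m} (dcycle m) R (f \<circ> e)" "(f \<circ> e) ` {..<m} \<subseteq> D"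
    using rel_embedding_comp[of _ _ Q e D' R f] assms(2,3) by (auto simp: image_subset_iff)
  then show False using assms(1) \<open>m \<in> M\<close> unfolding cycle_free_def by blast
qed

lemma cycle_free_subset: "cycle_free M R D \<Longrightarrow> D' \<subseteq> D \<Longrightarrow> cycle_free M R D'"
  unfolding cycle_free_def by blast

lemma cycle_free_dcycle:
  assumes "n \<notin> M" "\<forall>m\<in>M. 3 \<le> m"
  shows "cycle_free M (dcycle n) {..<n}"
  using assms dcycle_embedding_length unfolding cycle_free_def by metis

lemma dcycle_embedding_no_loop:
  "rel_embedding {..<m} (dcycle m) R e \<Longrightarrow> 3 \<le> m \<Longrightarrow> i < m \<Longrightarrow> \<not> R (e i) (e i)"
  unfolding rel_embedding_def using dcycle_irrefl by auto

lemma dcycle_embedding_no_2cycle: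
  "rel_embedding {..<m} (dcycle m) R e \<Longrightarrow> 3 \<le> m \<Longrightarrow> i < m \<Longrightarrow> j < m
   \<Longrightarrow> \<not> (R (e i) (e j) \<and> R (e j) (e i))"
  unfolding rel_embedding_def using dcycle_asym by auto

section \<open>The Henson digraph omitting cycles of lengths in M\<close>

definition one_point_ext :: "('a \<Rightarrow> 'a \<Rightarrow> bool) \<Rightarrow> 'a set \<Rightarrow> 'a set \<Rightarrow> bool \<Rightarrow> 'a \<Rightarrow> 'a \<Rightarrow> 'a \<Rightarrow> bool" where
  "one_point_ext R Out In loop p x y =
     (if x = p then (if y = p then loop else y \<in> Out) else if y = p then x \<in> In else R x y)"

text \<open>Every natural number n is read as a request for a new point with out-neighbours Out and
  in-neighbours In inside a finite set S of earlier points; the pairing with a counter makes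
  each request recur at arbitrarily large n.\<close>

definition request :: "nat \<Rightarrow> nat set \<times> nat set \<times> nat set \<times> bool" where
  "request n = (let (s, r) = prod_decode (fst (prod_decode n)); (out, r) = prod_decode r; (inn, l) = prod_decode r
     in (set (list_decode s), set (list_decode out), set (list_decode inn), l = 0))"

definition realizable :: "nat set \<Rightarrow> (nat \<Rightarrow> nat \<Rightarrow> bool) \<Rightarrow> nat \<Rightarrow> bool" where
  "realizable M R n = (case request n of (S, Out, In, loop) \<Rightarrow>
     S \<subseteq> {..<n} \<and> cycle_free M (one_point_ext R Out In loop n) (insert n S))"

text \<open>Point n is added at stage n + 1. Points outside the request are joined to n in both
  directions, and an unrealizable request makes n a looped universal point: in either case no
  induced cycle of length at least 3 can pass through such an edge.\<close>

primrec stage :: "nat set \<Rightarrow> nat \<Rightarrow> nat \<Rightarrow> nat \<Rightarrow> bool" where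
  "stage M 0 = (\<lambda>x y. False)"
| "stage M (Suc n) = (\<lambda>x y. x \<le> n \<and> y \<le> n \<and>
     (case request n of (S, Out, In, loop) \<Rightarrow>
        if realizable M (stage M n) n then one_point_ext (stage M n) (Out \<union> - S) (In \<union> - S) loop n x y
        else one_point_ext (stage M n) UNIV UNIV True n x y))"

definition henson :: "nat set \<Rightarrow> nat \<Rightarrow> nat \<Rightarrow> bool" where
  "henson M x y \<longleftrightarrow> stage M (Suc (max x y)) x y"

lemma stage_Suc_below: "x < n \<Longrightarrow> y < n \<Longrightarrow> stage M (Suc n) x y = stage M n x y"
  by (auto simp: one_point_ext_def split: prod.split)

lemma stage_mono:
  assumes "x < n" "y < n" "n \<le> k"
  shows "stage M k x y = stage M n x y"
  using assms(3)
proof (induction k rule: dec_induct)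
  case (step k)
  then show ?case using stage_Suc_below[of x k y M] assms by simp
qed simp

lemma henson_stage: "max x y < k \<Longrightarrow> henson M x y = stage M k x y"
  unfolding henson_def by (rule stage_mono[symmetric]) auto

lemma stage_Suc_realizable:
  assumes "request n = (S, Out, In, loop)" "realizable M (stage M n) n" "x \<le> n" "y \<le> n"
  shows "stage M (Suc n) x y = one_point_ext (stage M n) (Out \<union> - S) (In \<union> - S) loop n x y"
  using assms by simp

lemma stage_Suc_cycle_avoids_new_point:
  assumes M: "\<forall>m\<in>M. 3 \<le> m" and m: "m \<in> M" and rng: "e ` {..<m} \<subseteq> {..<Suc n}"
    and emb: "rel_embedding {..<m} (dcycle m) (stage M (Suc n)) e"
  shows "n \<notin> e ` {..<m}"
proof
  assume "n \<in> e ` {..<m}"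
  then obtain i where i: "i < m" "e i = n" by auto
  have m3: "3 \<le> m" using M m by blast
  obtain S Out In loop where rq: "request n = (S, Out, In, loop)" by (cases "request n") auto
  show False
  proof (cases "realizable M (stage M n) n")
    case False
    then show False using dcycle_embedding_no_loop[OF emb m3 i(1)] i rq
      by (simp add: one_point_ext_def)
  next
    case real: True
    then have S: "S \<subseteq> {..<n}"
      and cf: "cycle_free M (one_point_ext (stage M n) Out In loop n) (insert n S)"
      using rq unfolding realizable_def by auto
    show False
    proof (cases "e ` {..<m} \<subseteq> insert n S")
      case True
      have "cycle_free M (stage M (Suc n)) (insert n S)"
        using S rq real
        by (intro cycle_free_embedding[OF cf, of _ _ id])
           (auto simp: rel_embedding_def one_point_ext_def subset_eq)
      then show False using True emb m unfolding cycle_free_def by blast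
    next
      case False
      then obtain j where j: "j < m" "e j \<notin> insert n S" by auto
      then have "e j < n" using rng by (auto simp: less_Suc_eq)
      then have "stage M (Suc n) (e i) (e j) \<and> stage M (Suc n) (e j) (e i)"
        using i j rq real by (auto simp: one_point_ext_def)
      then show False using dcycle_embedding_no_2cycle[OF emb m3 i(1) j(1)] by blast
    qed
  qed
qed

lemma stage_cycle_free:
  assumes M: "\<forall>m\<in>M. 3 \<le> m"
  shows "cycle_free M (stage M n) {..<n}"
proof (induction n)
  case 0
  have "{..<m} \<noteq> {}" if "m \<in> M" for m using M that by (auto simp: lessThan_empty_iff)
  then show ?case unfolding cycle_free_def by blast
next
  case (Suc n)
  have below: "cycle_free M (stage M (Suc n)) {..<n}"
    by (rule cycle_free_embedding[OF Suc.IH, of _ _ id])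
       (auto simp: rel_embedding_def stage_Suc_below simp del: stage.simps)
  show ?case unfolding cycle_free_def
  proof (intro ballI allI impI notI)
    fix m e assume m: "m \<in> M" and rng: "e ` {..<m} \<subseteq> {..<Suc n}"
      and emb: "rel_embedding {..<m} (dcycle m) (stage M (Suc n)) e"
    have "e ` {..<m} \<subseteq> {..<n}"
      using stage_Suc_cycle_avoids_new_point[OF M m rng emb] rng by (fastforce simp: less_Suc_eq)
    then show False using below m emb unfolding cycle_free_def by blast
  qed
qed

lemma henson_cycle_free:
  assumes "\<forall>m\<in>M. 3 \<le> m"
  shows "cycle_free M (henson M) UNIV"
  unfolding cycle_free_def
proof (intro ballI allI impI notI)
  fix m e assume m: "m \<in> M" and emb: "rel_embedding {..<m} (dcycle m) (henson M) e"
  define N where "N = Suc (Max (e ` {..<m}))"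
  have rng: "e ` {..<m} \<subseteq> {..<N}" unfolding N_def by (auto simp: less_Suc_eq_le)
  have "henson M (e x) (e y) = stage M N (e x) (e y)" if "x < m" "y < m" for x y
    using rng that by (intro henson_stage) auto
  then have "rel_embedding {..<m} (dcycle m) (stage M N) e"
    using emb unfolding rel_embedding_def by auto
  then show False using stage_cycle_free[OF assms, of N] m rng unfolding cycle_free_def by blast
qed

lemma henson_one_point_extension:
  assumes fin: "finite S" and p: "p \<notin> S" and cf: "cycle_free M Q (insert p S)"
    and agree: "\<forall>x\<in>S. \<forall>y\<in>S. henson M x y = Q x y"
  shows "\<exists>a. rel_embedding (insert p S) Q (henson M) (id(p := a))"
proof -
  let ?Out = "{s\<in>S. Q p s}" and ?In = "{s\<in>S. Q s p}"
  obtain ss outs ins where ss: "set ss = S" "set outs = ?Out" "set ins = ?In"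
    using finite_list[OF fin] finite_list[of ?Out] finite_list[of ?In] fin by auto
  define n where "n = prod_encode (prod_encode (list_encode ss, prod_encode (list_encode outs,
    prod_encode (list_encode ins, if Q p p then 0 else 1))), Suc (Max (insert 0 S)))"
  have rq: "request n = (S, ?Out, ?In, Q p p)"
    unfolding request_def n_def using ss by (simp add: Let_def)
  have S: "S \<subseteq> {..<n}"
  proof
    fix s assume "s \<in> S"
    then have "s < Suc (Max (insert 0 S))" using fin by (simp add: less_Suc_eq_le)
    then show "s \<in> {..<n}" using le_prod_encode_2 unfolding n_def by (simp add: less_le_trans)
  qed
  have n: "n \<notin> S" using S by auto
  let ?R = "one_point_ext (stage M n) ?Out ?In (Q p p) n"
  have "rel_embedding (insert n S) ?R Q (id(n := p))"
    unfolding rel_embedding_def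
  proof (intro conjI ballI)
    show "inj_on (id(n := p)) (insert n S)" using p n by (auto simp: inj_on_def)
    fix x y assume "x \<in> insert n S" "y \<in> insert n S"
    then show "Q ((id(n := p)) x) ((id(n := p)) y) = ?R x y"
      using agree S n henson_stage[of x y n M] by (auto simp: one_point_ext_def)
  qed
  then have "cycle_free M ?R (insert n S)"
    by (rule cycle_free_embedding[OF cf]) auto
  then have real: "realizable M (stage M n) n"
    unfolding realizable_def using rq S by simp
  have "rel_embedding (insert p S) Q (henson M) (id(p := n))"
    unfolding rel_embedding_def
  proof (intro conjI ballI)
    show "inj_on (id(p := n)) (insert p S)" using p n by (auto simp: inj_on_def)
    fix x y assume x: "x \<in> insert p S" and y: "y \<in> insert p S"
    let ?x = "(id(p := n)) x" and ?y = "(id(p := n)) y"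
    have le: "?x \<le> n" "?y \<le> n" using x y S by auto
    have "henson M ?x ?y = stage M (Suc n) ?x ?y" using le by (intro henson_stage) auto
    also have "\<dots> = one_point_ext (stage M n) (?Out \<union> - S) (?In \<union> - S) (Q p p) n ?x ?y"
      by (rule stage_Suc_realizable[OF rq real le])
    also have "\<dots> = Q x y"
      using x y p n S agree henson_stage[of x y n M] by (auto simp: one_point_ext_def)
    finally show "henson M ?x ?y = Q x y" .
  qed
  then show ?thesis by blast
qed

lemma henson_extension:
  assumes fin: "finite D" and p: "p \<notin> D" and emb: "rel_embedding D Q (henson M) e"
    and cf: "cycle_free M Q (insert p D)"
  shows "\<exists>a. rel_embedding (insert p D) Q (henson M) (e(p := a))"
proof -
  let ?S = "e ` D" and ?e' = "inv_into D e"
  obtain p' where p': "p' \<notin> ?S" using ex_new_if_finite[OF infinite_UNIV_nat] fin by blast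
  define \<psi> where "\<psi> = ?e'(p' := p)"
  define Q' where "Q' u v = Q (\<psi> u) (\<psi> v)" for u v
  have inj: "inj_on e D" using emb unfolding rel_embedding_def by blast
  have \<psi>e: "\<psi> ((e(p := p')) x) = x" if "x \<in> insert p D" for x
  proof (cases "x = p")
    case False
    then have "e x \<noteq> p'" "x \<in> D" using p' that by auto
    with False show ?thesis using inj by (simp add: \<psi>_def)
  qed (simp add: \<psi>_def)
  have \<psi>S: "\<psi> ` ?S = ?e' ` ?S"
    unfolding \<psi>_def by (rule image_cong[OF refl]) (use p' in auto)
  have e'D: "?e' ` ?S \<subseteq> D" by (blast intro: inv_into_into)
  have p_new: "p \<notin> ?e' ` ?S" using e'D p by blast
  then have "inj_on \<psi> ?S"
    unfolding \<psi>_def by (intro inj_on_fun_updI inj_on_inv_into) simp_all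
  then have "inj_on \<psi> (insert p' ?S)"
    using \<psi>S p_new p' by (simp add: inj_on_insert \<psi>_def)
  then have "rel_embedding (insert p' ?S) Q' Q \<psi>"
    unfolding rel_embedding_def by (simp add: Q'_def)
  moreover have "\<psi> ` insert p' ?S \<subseteq> insert p D"
    unfolding image_insert \<psi>S using e'D by (auto simp: \<psi>_def)
  ultimately have cf': "cycle_free M Q' (insert p' ?S)" by (rule cycle_free_embedding[OF cf])
  have agree: "\<forall>u\<in>?S. \<forall>v\<in>?S. henson M u v = Q' u v"
  proof (intro ballI)
    fix u v assume "u \<in> ?S" "v \<in> ?S"
    then obtain x y where xy: "x \<in> D" "y \<in> D" "u = e x" "v = e y" by blast
    moreover have "x \<noteq> p" "y \<noteq> p" using xy p by auto
    ultimately have "\<psi> u = x" "\<psi> v = y" using \<psi>e[of x] \<psi>e[of y] by auto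
    then show "henson M u v = Q' u v" using emb xy unfolding rel_embedding_def Q'_def by simp
  qed
  obtain a where a: "rel_embedding (insert p' ?S) Q' (henson M) (id(p' := a))"
    using henson_one_point_extension[OF _ p' cf' agree] fin by blast
  have "inj_on (e(p := p')) (insert p D)" using inj p p' by (auto simp: inj_on_def)
  then have "rel_embedding (insert p D) Q Q' (e(p := p'))"
    unfolding rel_embedding_def using \<psi>e by (simp add: Q'_def)
  then have "rel_embedding (insert p D) Q (henson M) (id(p' := a) \<circ> e(p := p'))"
    by (rule rel_embedding_comp[OF _ a]) (use p in auto)
  then have "rel_embedding (insert p D) Q (henson M) (e(p := a))"
    by (rule rel_embedding_cong) (use p' in auto)
  then show ?thesis ..
qed

lemma henson_universal:
  assumes "finite D" "cycle_free M Q D"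
  shows "\<exists>e. rel_embedding D Q (henson M) e"
  using assms
proof (induction D rule: finite_induct)
  case empty
  then show ?case by (auto simp: rel_embedding_def)
next
  case (insert p D)
  then obtain e where "rel_embedding D Q (henson M) e"
    using cycle_free_subset[of M Q "insert p D" D] by blast
  then show ?case using henson_extension[of D p Q M e] insert.hyps insert.prems by blast
qed

section \<open>Homogeneity by back and forth\<close>

definition one_point_extendable :: "('a \<Rightarrow> 'a \<Rightarrow> bool) \<Rightarrow> bool" where
  "one_point_extendable R \<longleftrightarrow> (\<forall>D h x. finite D \<and> rel_embedding D R R h \<and> x \<notin> D \<longrightarrow>
     (\<exists>y. rel_embedding (insert x D) R R (h(x := y))))"

lemma henson_one_point_extendable:
  assumes "\<forall>m\<in>M. 3 \<le> m"
  shows "one_point_extendable (henson M)"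
  unfolding one_point_extendable_def
proof (intro allI impI)
  fix D h x assume "finite D \<and> rel_embedding D (henson M) (henson M) h \<and> x \<notin> D"
  moreover have "cycle_free M (henson M) (insert x D)"
    using cycle_free_subset[OF henson_cycle_free[OF assms]] by blast
  ultimately show "\<exists>y. rel_embedding (insert x D) (henson M) (henson M) (h(x := y))"
    using henson_extension[of D x "henson M" M h] by blast
qed

lemma one_point_extendable_forth:
  assumes "one_point_extendable R" "finite D" "rel_embedding D R R h"
  shows "\<exists>h'. rel_embedding (insert x D) R R h' \<and> (\<forall>z\<in>D. h' z = h z)"
proof (cases "x \<in> D")
  case True
  then show ?thesis using assms(3) by (auto simp: insert_absorb)
next
  case False
  then obtain y where "rel_embedding (insert x D) R R (h(x := y))"
    using assms unfolding one_point_extendable_def by blast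
  then show ?thesis using False by auto
qed

text \<open>The back step is the forth step applied to the inverse map.\<close>

lemma one_point_extendable_back:
  assumes ext: "one_point_extendable R" and fin: "finite D" and emb: "rel_embedding D R R h"
  shows "\<exists>x h'. rel_embedding (insert x D) R R h' \<and> (\<forall>z\<in>D. h' z = h z) \<and> y \<in> h' ` insert x D"
proof (cases "y \<in> h ` D")
  case True
  then obtain x where "x \<in> D" "y = h x" by blast
  then show ?thesis using emb by (intro exI[of _ x] exI[of _ h]) (auto simp: insert_absorb)
next
  case False
  let ?g = "inv_into D h"
  have inj: "inj_on h D" using emb unfolding rel_embedding_def by blast
  have "rel_embedding (h ` D) R R ?g" by (rule rel_embedding_inv_into[OF emb])
  then obtain a where a: "rel_embedding (insert y (h ` D)) R R (?g(y := a))"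
    using ext fin False unfolding one_point_extendable_def by blast
  let ?g' = "?g(y := a)"
  have inj': "inj_on ?g' (insert y (h ` D))" using a unfolding rel_embedding_def by blast
  have g'h: "?g' (h z) = z" if "z \<in> D" for z
    using that False inj by (auto simp: image_iff)
  have aD: "a \<notin> D"
  proof
    assume "a \<in> D"
    then have "?g' (h a) = ?g' y" using g'h by simp
    then show False using inj_onD[OF inj'] \<open>a \<in> D\<close> False by blast
  qed
  have "?g' ` h ` D = D"
    unfolding image_image using image_cong[OF refl g'h, of D] by simp
  then have "?g' ` insert y (h ` D) = insert a D" by (simp only: image_insert fun_upd_same)
  then have "rel_embedding (insert a D) R R (inv_into (insert y (h ` D)) ?g')"
    using rel_embedding_inv_into[OF a] by simp
  moreover have "inv_into (insert y (h ` D)) ?g' z = (h(a := y)) z" if "z \<in> insert a D" for z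
    using that aD g'h by (auto intro!: inv_into_f_eq[OF inj'])
  ultimately have "rel_embedding (insert a D) R R (h(a := y))" by (rule rel_embedding_cong)
  then show ?thesis using aD by (intro exI[of _ a] exI[of _ "h(a := y)"]) auto
qed

definition back_forth_step :: "(nat \<Rightarrow> nat \<Rightarrow> bool) \<Rightarrow> nat
    \<Rightarrow> (nat \<Rightarrow> nat) \<times> nat set \<Rightarrow> (nat \<Rightarrow> nat) \<times> nat set \<Rightarrow> bool" where
  "back_forth_step R k s s' \<longleftrightarrow> finite (snd s') \<and> rel_embedding (snd s') R R (fst s') \<and>
     snd s \<subseteq> snd s' \<and> (\<forall>z\<in>snd s. fst s' z = fst s z) \<and> k \<in> snd s' \<and> k \<in> fst s' ` snd s'"

lemma back_forth_step_exists:
  assumes ext: "one_point_extendable R" and "finite (snd s)" "rel_embedding (snd s) R R (fst s)"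
  shows "\<exists>s'. back_forth_step R k s s'"
proof -
  obtain h1 where h1: "rel_embedding (insert k (snd s)) R R h1" "\<forall>z\<in>snd s. h1 z = fst s z"
    using one_point_extendable_forth[OF assms] by blast
  obtain x h2 where h2: "rel_embedding (insert x (insert k (snd s))) R R h2"
      "\<forall>z\<in>insert k (snd s). h2 z = h1 z" "k \<in> h2 ` insert x (insert k (snd s))"
    using one_point_extendable_back[OF ext _ h1(1)] assms(2) by blast
  have "back_forth_step R k s (h2, insert x (insert k (snd s)))"
    unfolding back_forth_step_def using assms(2) h1(2) h2 by auto
  then show ?thesis ..
qed

primrec back_forth_chain :: "(nat \<Rightarrow> nat \<Rightarrow> bool) \<Rightarrow> (nat \<Rightarrow> nat) \<Rightarrow> nat set
    \<Rightarrow> nat \<Rightarrow> (nat \<Rightarrow> nat) \<times> nat set" where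
  "back_forth_chain R h S 0 = (h, S)"
| "back_forth_chain R h S (Suc k) = (SOME s'. back_forth_step R k (back_forth_chain R h S k) s')"

lemma back_forth_chain_step:
  assumes "one_point_extendable R" "finite S" "rel_embedding S R R h"
  shows "back_forth_step R k (back_forth_chain R h S k) (back_forth_chain R h S (Suc k))"
proof (induction k)
  case 0
  show ?case using someI_ex[OF back_forth_step_exists[of R "(h, S)" 0]] assms by simp
next
  case (Suc k)
  then have "finite (snd (back_forth_chain R h S (Suc k)))"
    "rel_embedding (snd (back_forth_chain R h S (Suc k))) R R (fst (back_forth_chain R h S (Suc k)))"
    unfolding back_forth_step_def by auto
  then show ?case
    unfolding back_forth_chain.simps(2)[of R h S "Suc k"]
    by (rule someI_ex[OF back_forth_step_exists[OF assms(1)]])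
qed

lemma back_forth_chain_mono:
  assumes "one_point_extendable R" "finite S" "rel_embedding S R R h" "j \<le> k"
  shows "snd (back_forth_chain R h S j) \<subseteq> snd (back_forth_chain R h S k) \<and>
    (\<forall>z\<in>snd (back_forth_chain R h S j). fst (back_forth_chain R h S k) z = fst (back_forth_chain R h S j) z)"
  using assms(4)
proof (induction k rule: dec_induct)
  case (step k)
  then show ?case using back_forth_chain_step[OF assms(1-3), of k]
    unfolding back_forth_step_def by auto
qed simp

text \<open>Point k enters both the domain and the range at step k + 1, so the
  union of the chain is a bijection.\<close>

lemma one_point_extendable_automorphism:
  fixes R :: "nat \<Rightarrow> nat \<Rightarrow> bool"
  assumes "one_point_extendable R" "finite S" "rel_embedding S R R h"
  shows "\<exists>g. bij g \<and> (\<forall>x y. R (g x) (g y) = R x y) \<and> (\<forall>x\<in>S. g x = h x)"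
proof -
  let ?h = "\<lambda>k. fst (back_forth_chain R h S k)" and ?D = "\<lambda>k. snd (back_forth_chain R h S k)"
  note step = back_forth_chain_step[OF assms, unfolded back_forth_step_def]
  note mono = back_forth_chain_mono[OF assms]
  define g where "g x = ?h (Suc x) x" for x
  have in_dom: "x \<in> ?D k" if "x < k" for x k
    using step[of x] mono[of "Suc x" k] that by auto
  have g_eq: "g x = ?h k x" if "x < k" for x k
    using step[of x] mono[of "Suc x" k] that unfolding g_def by auto
  have "inj g"
  proof (rule injI)
    fix x y assume "g x = g y"
    let ?k = "Suc (max x y)"
    have "?h ?k x = ?h ?k y" using \<open>g x = g y\<close> g_eq[of x ?k] g_eq[of y ?k] by simp
    then show "x = y"
      using step[of "max x y"] in_dom[of x ?k] in_dom[of y ?k]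
      unfolding rel_embedding_def inj_on_def by auto
  qed
  moreover have "surj g"
  proof (rule surjI)
    fix y
    obtain x where x: "x \<in> ?D (Suc y)" "y = ?h (Suc y) x" using step[of y] by auto
    have "g x = ?h (max (Suc x) (Suc y)) x" by (rule g_eq) simp
    also have "\<dots> = y" using mono[of "Suc y" "max (Suc x) (Suc y)"] x by simp
    finally show "g (SOME x. g x = y) = y" by (rule someI)
  qed
  moreover have "R (g x) (g y) = R x y" for x y
    using step[of "max x y"] in_dom[of x "Suc (max x y)"] in_dom[of y "Suc (max x y)"]
      g_eq[of x "Suc (max x y)"] g_eq[of y "Suc (max x y)"]
    unfolding rel_embedding_def by auto
  moreover have "g x = h x" if "x \<in> S" for x
    using mono[of 0 "Suc x"] that unfolding g_def by simp
  ultimately show ?thesis by (auto intro: bijI)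
qed

section \<open>Cycles in the Henson digraph and the induced substructure problem\<close>

lemma henson_embeds_dcycle_iff:
  assumes M: "\<forall>m\<in>M. 3 \<le> m"
  shows "(\<exists>e. rel_embedding {..<n} (dcycle n) (henson M) e) \<longleftrightarrow> n \<notin> M"
proof
  assume "\<exists>e. rel_embedding {..<n} (dcycle n) (henson M) e"
  then show "n \<notin> M" using henson_cycle_free[OF M] unfolding cycle_free_def by blast
next
  assume "n \<notin> M"
  then show "\<exists>e. rel_embedding {..<n} (dcycle n) (henson M) e"
    using henson_universal[OF _ cycle_free_dcycle[OF _ M]] by blast
qed

primrec path_edges :: "nat \<Rightarrow> nat list list" where
  "path_edges 0 = []"
| "path_edges (Suc j) = [j, Suc j] # path_edges j"

definition cycle_edges :: "nat \<Rightarrow> nat list list" where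
  "cycle_edges n = [n - 1, 0] # path_edges (n - 1)"

definition cycle_code :: "nat \<Rightarrow> nat" where
  "cycle_code n = prod_encode (n, list_encode [list_encode (map list_encode (cycle_edges n))])"

lemma set_path_edges: "set (path_edges j) = {[i, Suc i] | i. i < j}"
  by (induction j) (auto simp: less_Suc_eq)

lemma cycle_edges_dcycle:
  assumes "x < n" "y < n"
  shows "[x, y] \<in> set (cycle_edges n) \<longleftrightarrow> dcycle n x y"
  using assms unfolding cycle_edges_def dcycle_def
  by (cases "Suc x < n") (auto simp: set_path_edges mod_if)

lemma decode_cycle_code:
  "decode_struct [2] (cycle_code n) = \<lparr>carrier = {..<n},
     rel = (\<lambda>i xs. i = 0 \<and> length xs = 2 \<and> set xs \<subseteq> {..<n} \<and> xs \<in> set (cycle_edges n))\<rparr>"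
  unfolding decode_struct_def cycle_code_def
  by (auto simp: Let_def inj_image_mem_iff[OF inj_list_encode] intro!: ext)

definition digraph_struct :: "('a \<Rightarrow> 'a \<Rightarrow> bool) \<Rightarrow> 'a rstruct" where
  "digraph_struct R = \<lparr>carrier = UNIV, rel = (\<lambda>i xs. i = 0 \<and> length xs = 2 \<and> R (xs ! 0) (xs ! 1))\<rparr>"

lemma all_binary_tuples:
  "(\<forall>i < length [2::nat]. \<forall>xs. length xs = [2::nat] ! i \<and> set xs \<subseteq> S \<longrightarrow> P i xs)
     \<longleftrightarrow> (\<forall>x\<in>S. \<forall>y\<in>S. P 0 [x, y])"
  by (auto simp: length_Suc_conv numeral_2_eq_2)

lemma struct_on_digraph_struct: "struct_on [2] (digraph_struct R)"
  unfolding struct_on_def digraph_struct_def by simp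

lemma homogeneous_digraph_struct:
  fixes R :: "nat \<Rightarrow> nat \<Rightarrow> bool"
  assumes ext: "one_point_extendable R"
  shows "homogeneous [2] (digraph_struct R)"
  unfolding homogeneous_def
proof (intro allI impI)
  fix h S T assume "finite S \<and> finite T \<and> partial_iso [2] (digraph_struct R) h S T"
  then have "finite S" "rel_embedding S R R h"
    unfolding partial_iso_def all_binary_tuples rel_embedding_def
    by (auto simp: digraph_struct_def bij_betw_def)
  then obtain g where g: "bij g" "\<forall>x y. R (g x) (g y) = R x y" "\<forall>x\<in>S. g x = h x"
    using one_point_extendable_automorphism[OF ext] by blast
  then have "automorphism [2] (digraph_struct R) g"
    unfolding automorphism_def partial_iso_def all_binary_tuples by (simp add: digraph_struct_def)
  then show "\<exists>g. automorphism [2] (digraph_struct R) g \<and> (\<forall>x\<in>S. g x = h x)" using g(3) by blast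
qed

lemma cycle_code_in_ISP_iff:
  "cycle_code n \<in> ISP [2] (digraph_struct R) \<longleftrightarrow> (\<exists>e. rel_embedding {..<n} (dcycle n) R e)"
  unfolding ISP_def embeds_def all_binary_tuples rel_embedding_def
  by (auto simp: decode_cycle_code digraph_struct_def cycle_edges_dcycle)

section \<open>Computability of the reduction\<close>

lemma evalr_comp1: "evalr g xs y \<Longrightarrow> evalr f [y] z \<Longrightarrow> evalr (Comp f [g]) xs z"
  by (rule ev_comp[where ys="[y]"]) auto

lemma evalr_comp2:
  "evalr g1 xs y1 \<Longrightarrow> evalr g2 xs y2 \<Longrightarrow> evalr f [y1, y2] z \<Longrightarrow> evalr (Comp f [g1, g2]) xs z"
  by (rule ev_comp[where ys="[y1, y2]"]) auto

lemma evalr_prim: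
  assumes "evalr f xs (F 0)" "\<And>n. evalr g (F n # n # xs) (F (Suc n))"
  shows "evalr (Prim f g) (n # xs) (F n)"
  by (induction n) (auto intro: evalr.intros assms)

lemma evalr_comp_succ: "evalr g xs y \<Longrightarrow> evalr (Comp Succ [g]) xs (Suc y)"
  by (rule evalr_comp1) (auto intro: evalr.intros)

lemma evalr_projI: "i < length xs \<Longrightarrow> v = xs ! i \<Longrightarrow> evalr (Proj i) xs v"
  by (simp add: ev_proj)

lemma evalr_zeroI: "v = 0 \<Longrightarrow> evalr Zero xs v"
  by (simp add: ev_zero)

lemmas evalr_basicI = ev_succ evalr_comp1 evalr_comp2 evalr_comp_succ evalr_projI evalr_zeroI

definition add_recf :: recf where
  "add_recf = Prim (Proj 0) (Comp Succ [Proj 0])"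

lemma evalr_comp_add:
  "evalr g1 xs a \<Longrightarrow> evalr g2 xs b \<Longrightarrow> v = a + b \<Longrightarrow> evalr (Comp add_recf [g1, g2]) xs v"
  unfolding add_recf_def
  by (auto intro!: evalr_comp2 evalr_prim[where F="\<lambda>a. a + b"] evalr_basicI)

definition triangle_recf :: recf where
  "triangle_recf = Prim Zero (Comp add_recf [Proj 0, Comp Succ [Proj 1]])"

lemma evalr_comp_triangle:
  "evalr g xs a \<Longrightarrow> v = triangle a \<Longrightarrow> evalr (Comp triangle_recf [g]) xs v"
  unfolding triangle_recf_def
  by (auto intro!: evalr_comp1 evalr_prim[where F=triangle] evalr_basicI evalr_comp_add)

definition prod_encode_recf :: recf where
  "prod_encode_recf = Comp add_recf [Comp triangle_recf [Comp add_recf [Proj 0, Proj 1]], Proj 0]"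

lemma evalr_comp_prod_encode:
  "evalr g1 xs a \<Longrightarrow> evalr g2 xs b \<Longrightarrow> v = prod_encode (a, b)
   \<Longrightarrow> evalr (Comp prod_encode_recf [g1, g2]) xs v"
  unfolding prod_encode_recf_def prod_encode_def
  by (auto intro!: evalr_basicI evalr_comp_add evalr_comp_triangle)

text \<open>The terms below follow list_encode (x # xs) = Suc (prod_encode (x, list_encode xs)).\<close>

definition path_edges_recf :: recf where
  "path_edges_recf = Prim Zero (Comp Succ [Comp prod_encode_recf [Comp Succ [Comp prod_encode_recf
     [Proj 1, Comp Succ [Comp prod_encode_recf [Comp Succ [Proj 1], Zero]]]], Proj 0]])"

lemma evalr_comp_path_edges:
  "evalr g xs j \<Longrightarrow> v = list_encode (map list_encode (path_edges j))
   \<Longrightarrow> evalr (Comp path_edges_recf [g]) xs v"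
  unfolding path_edges_recf_def
  by (auto intro!: evalr_comp1 evalr_prim[where F="\<lambda>j. list_encode (map list_encode (path_edges j))"]
      evalr_basicI evalr_comp_prod_encode)

definition cycle_code_recf :: recf where
  "cycle_code_recf = Comp prod_encode_recf [Comp Succ [Comp Succ [Comp Succ [Proj 0]]],
     Comp Succ [Comp prod_encode_recf [Comp Succ [Comp prod_encode_recf [Comp Succ [Comp prod_encode_recf
       [Comp Succ [Comp Succ [Proj 0]], Comp Succ [Comp prod_encode_recf [Zero, Zero]]]],
       Comp path_edges_recf [Comp Succ [Comp Succ [Proj 0]]]]], Zero]]]"

lemma computable_cycle_code: "computable (\<lambda>k. cycle_code (k + 3))"
  unfolding computable_def
proof (intro exI allI)
  fix k
  show "evalr cycle_code_recf [k] (cycle_code (k + 3))"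
    unfolding cycle_code_recf_def cycle_code_def cycle_edges_def
    by (auto intro!: evalr_basicI evalr_comp_prod_encode evalr_comp_path_edges simp: numeral_eq_Suc)
qed

theorem theorem9:
  fixes X :: "nat set"
  shows "\<exists>(sig :: nat list) (A :: nat rstruct).
           struct_on sig A \<and> homogeneous sig A \<and> many_one_reducible X (ISP sig A)"
proof (intro exI conjI)
  define M where "M = {k + 3 | k. k \<notin> X}"
  have M: "\<forall>m\<in>M. 3 \<le> m" unfolding M_def by auto
  show "struct_on [2] (digraph_struct (henson M))" by (rule struct_on_digraph_struct)
  show "homogeneous [2] (digraph_struct (henson M))"
    by (rule homogeneous_digraph_struct[OF henson_one_point_extendable[OF M]])
  have "k \<in> X \<longleftrightarrow> cycle_code (k + 3) \<in> ISP [2] (digraph_struct (henson M))" for k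
  proof -
    have "k \<in> X \<longleftrightarrow> k + 3 \<notin> M" unfolding M_def by auto
    also have "\<dots> \<longleftrightarrow> (\<exists>e. rel_embedding {..<k + 3} (dcycle (k + 3)) (henson M) e)"
      by (rule henson_embeds_dcycle_iff[OF M, symmetric])
    also have "\<dots> \<longleftrightarrow> cycle_code (k + 3) \<in> ISP [2] (digraph_struct (henson M))"
      by (rule cycle_code_in_ISP_iff[symmetric])
    finally show ?thesis .
  qed
  then show "many_one_reducible X (ISP [2] (digraph_struct (henson M)))"
    unfolding many_one_reducible_def using computable_cycle_code by blast
qed

end
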